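(* For every integer $n \geq 1$, $$\sum_{\pi \vdash n} t(\pi) = \sum_{\pi \in V} (-1)^{h(\pi)}\, p(n - |\pi|).$$
   Context: $p(m)$ is the number of partitions of $m$, with $p(0)=1$ and $p(m)=0$ for $m<0$; $|\pi|$ is the sum of the parts of $\pi$. For a partition $\pi$, $f_i$ denotes the number of times $i$ appears as a part, and $t(\pi)$ is the nonnegative integer such that $f_i$ is odd for all $1 \leq i \leq t(\pi)$ and $f_{t(\pi)+1}$ is even (possibly zero). A $C$-partition is a partition $\pi$ such that whenever $i$ is a part of $\pi$, every positive integer less than $i$ is also a part of $\pi$. $V$ is the set of all nonempty $C$-partitions. For a partition $\pi$, $h(\pi)$ is the number of distinct part sizes of $\pi$ that occur with an even (positive) frequency. *)

theory Defs
  imports Main "HOL-Library.Multiset"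
begin

definition partitions :: "nat \<Rightarrow> nat multiset set" where
  "partitions n = {M. (\<forall>x\<in>#M. 0 < x) \<and> sum_mset M = n}"

definition p :: "int \<Rightarrow> nat" where
  "p m = (if m < 0 then 0 else card (partitions (nat m)))"

definition t :: "nat multiset \<Rightarrow> nat" where
  "t M = (THE k. (\<forall>i. 1 \<le> i \<and> i \<le> k \<longrightarrow> odd (count M i)) \<and> even (count M (k + 1)))"

definition is_C_partition :: "nat multiset \<Rightarrow> bool" where
  "is_C_partition M \<longleftrightarrow> (\<forall>x\<in>#M. 0 < x) \<and> (\<forall>i\<in>#M. \<forall>j. 0 < j \<and> j < i \<longrightarrow> j \<in># M)"

definition V :: "nat multiset set" where
  "V = {M. is_C_partition M \<and> M \<noteq> {#}}"

definition h :: "nat multiset \<Rightarrow> nat" where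
  "h M = card {i. i \<in># M \<and> even (count M i)}"

end

theory Submission
  imports Defs
begin

text \<open>
  Write the right-hand side as a sum over pairs \<open>(\<sigma>, \<rho>)\<close> with \<open>\<sigma> \<in> V\<close> and \<open>\<rho>\<close> a partition
  of \<open>n - |\<sigma>|\<close>; putting \<open>\<pi> = \<sigma> + \<rho>\<close> turns it into \<open>\<Sum>\<^sub>\<pi> \<Sum>\<^sub>\<sigma> (-1)^h(\<sigma>)\<close> over
  partitions \<open>\<pi>\<close> of \<open>n\<close> and C-partitions \<open>\<sigma>\<close> contained in \<open>\<pi>\<close>. A C-partition with largest part
  \<open>m\<close> inside \<open>\<pi>\<close> amounts to a choice of multiplicities \<open>1 \<le> g\<^sub>i \<le> f\<^sub>i\<close> for \<open>i \<le> m\<close>, and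
  its sign is \<open>\<Prod>\<^sub>i (-1)^[g\<^sub>i even]\<close>. Hence these signs sum to \<open>\<Prod>\<^sub>i\<^sub>\<le>\<^sub>m [f\<^sub>i odd]\<close>, which is
  \<open>1\<close> exactly when \<open>m \<le> t(\<pi>)\<close>, and summing over \<open>m\<close> gives \<open>t(\<pi>)\<close>.
\<close>

lemma finite_multisets_bounded_size:
  assumes "finite S"
  shows "finite {M. set_mset M \<subseteq> S \<and> size M \<le> k}"
proof -
  have "{M. set_mset M \<subseteq> S \<and> size M \<le> k} = (\<Union>j\<le>k. multisets_of_size S j)"
    by (auto simp: multisets_of_size_def)
  then show ?thesis
    using assms by auto
qed

lemma finite_submultisets: "finite {\<sigma>. \<sigma> \<subseteq># \<pi>}"
  by (rule finite_subset[OF _ finite_multisets_bounded_size[of "set_mset \<pi>" "size \<pi>"]])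
    (auto simp: size_mset_mono dest: mset_subset_eqD)

lemma member_le_sum_mset: "(x::'a::canonically_ordered_monoid_add) \<in># M \<Longrightarrow> x \<le> sum_mset M"
  using sum_mset.remove[of x M] le_iff_add by blast

lemma size_le_sum_mset: "\<forall>x\<in>#M. 0 < (x::nat) \<Longrightarrow> size M \<le> sum_mset M"
  by (induction M) auto

lemma finite_partitions_le: "finite {M. (\<forall>x\<in>#M. 0 < (x::nat)) \<and> sum_mset M \<le> n}"
  by (rule finite_subset[OF _ finite_multisets_bounded_size[of "{1..n}" n]])
    (use member_le_sum_mset size_le_sum_mset in force)+

lemma finite_partitions: "finite (partitions n)"
  by (rule finite_subset[OF _ finite_partitions_le[of n]]) (auto simp: partitions_def)

lemma p_diff: "m \<le> n \<Longrightarrow> p (int n - int m) = card (partitions (n - m))"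
  by (auto simp: p_def nat_diff_distrib)

lemma t_spec: "(\<forall>i. 1 \<le> i \<and> i \<le> t \<pi> \<longrightarrow> odd (count \<pi> i)) \<and> even (count \<pi> (t \<pi> + 1))"
proof -
  let ?P = "\<lambda>k. (\<forall>i. 1 \<le> i \<and> i \<le> k \<longrightarrow> odd (count \<pi> i)) \<and> even (count \<pi> (k + 1))"
  define k0 where "k0 = (LEAST k. even (count \<pi> (k + 1)))"
  have "sum_mset \<pi> + 1 \<notin># \<pi>"
    using member_le_sum_mset by fastforce
  then have "even (count \<pi> (sum_mset \<pi> + 1))"
    by (simp add: not_in_iff)
  then have "even (count \<pi> (k0 + 1))"
    unfolding k0_def by (rule LeastI)
  moreover have "odd (count \<pi> i)" if "1 \<le> i" "i \<le> k0" for i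
    using not_less_Least[of "i - 1" "\<lambda>k. even (count \<pi> (k + 1))"] that
    by (simp add: k0_def)
  ultimately have "?P k0"
    by blast
  moreover have "\<not> k < k'" if "?P k" "?P k'" for k k'
    using that by (metis Suc_eq_plus1 Suc_leI le_add2)
  ultimately have "\<exists>!k. ?P k"
    by (meson linorder_neqE_nat)
  then show ?thesis
    unfolding t_def by (rule theI')
qed

lemma le_t_iff: "m \<le> t \<pi> \<longleftrightarrow> (\<forall>i\<in>{1..m}. odd (count \<pi> i))"
proof
  assume "\<forall>i\<in>{1..m}. odd (count \<pi> i)"
  then show "m \<le> t \<pi>"
    using t_spec[of \<pi>] by (metis Suc_eq_plus1 atLeastAtMost_iff le_add2 not_less_eq_eq)
qed (use t_spec[of \<pi>] in auto)

lemma t_le_sum_mset: "t \<pi> \<le> sum_mset \<pi>"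
proof (cases "t \<pi> = 0")
  case False
  then have "odd (count \<pi> (t \<pi>))"
    using le_t_iff[of "t \<pi>" \<pi>] by simp
  then have "t \<pi> \<in># \<pi>"
    by (metis count_eq_zero_iff even_zero)
  then show ?thesis
    by (rule member_le_sum_mset)
qed simp

lemma mem_V_iff: "\<sigma> \<in> V \<longleftrightarrow> (\<exists>m\<ge>1. set_mset \<sigma> = {1..m})"
proof
  assume "\<sigma> \<in> V"
  then have pos: "\<forall>x\<in>#\<sigma>. 0 < x" and closed: "\<forall>i\<in>#\<sigma>. \<forall>j. 0 < j \<and> j < i \<longrightarrow> j \<in># \<sigma>"
    and "\<sigma> \<noteq> {#}"
    unfolding V_def is_C_partition_def by blast+ \<comment> \<open>\<open>simp\<close> loops on the downward closure\<close>
  define m where "m = Max (set_mset \<sigma>)"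
  have "m \<in># \<sigma>"
    using \<open>\<sigma> \<noteq> {#}\<close> by (simp add: m_def)
  have "set_mset \<sigma> \<subseteq> {1..m}"
    using pos by (auto simp: m_def Suc_le_eq)
  moreover have "{1..m} \<subseteq> set_mset \<sigma>"
    using closed \<open>m \<in># \<sigma>\<close> by (auto simp: le_less)
  ultimately have "set_mset \<sigma> = {1..m}"
    by (rule antisym)
  moreover have "1 \<le> m"
    using pos \<open>m \<in># \<sigma>\<close> by (simp add: Suc_le_eq)
  ultimately show "\<exists>m\<ge>1. set_mset \<sigma> = {1..m}"
    by blast
next
  assume "\<exists>m\<ge>1. set_mset \<sigma> = {1..m}"
  then obtain m where "1 \<le> m" "set_mset \<sigma> = {1..m}"
    by blast
  then show "\<sigma> \<in> V"
    by (auto simp: V_def is_C_partition_def)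
qed

definition C_submultisets :: "nat multiset \<Rightarrow> nat \<Rightarrow> nat multiset set" where
  "C_submultisets \<pi> m = {\<sigma>. set_mset \<sigma> = {1..m} \<and> \<sigma> \<subseteq># \<pi>}"

lemma finite_C_submultisets: "finite (C_submultisets \<pi> m)"
  by (rule finite_subset[OF _ finite_submultisets[of \<pi>]]) (auto simp: C_submultisets_def)

lemma V_submultisets_eq_Union:
  "{\<sigma>\<in>V. \<sigma> \<subseteq># \<pi>} = (\<Union>m\<in>{1..sum_mset \<pi>}. C_submultisets \<pi> m)"
proof -
  have "m \<le> sum_mset \<pi>" if "set_mset \<sigma> = {1..m}" "1 \<le> m" "\<sigma> \<subseteq># \<pi>" for \<sigma> m
    using that member_le_sum_mset[of m \<pi>] by (auto dest: mset_subset_eqD[of \<sigma> \<pi> m])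
  then show ?thesis
    by (auto simp: mem_V_iff C_submultisets_def)
qed

lemma C_submultisets_Suc:
  "C_submultisets \<pi> (Suc m) =
     (\<lambda>(\<sigma>, g). \<sigma> + replicate_mset g (Suc m)) ` (C_submultisets \<pi> m \<times> {1..count \<pi> (Suc m)})"
  (is "?lhs = ?f ` ?rhs")
proof
  show "?lhs \<subseteq> ?f ` ?rhs"
  proof
    fix \<tau>
    assume "\<tau> \<in> ?lhs"
    then have set_\<tau>: "set_mset \<tau> = {1..Suc m}" and "\<tau> \<subseteq># \<pi>"
      by (auto simp: C_submultisets_def)
    define \<sigma> where "\<sigma> = filter_mset (\<lambda>x. x \<noteq> Suc m) \<tau>"
    have "\<tau> = \<sigma> + replicate_mset (count \<tau> (Suc m)) (Suc m)"
      by (auto simp: \<sigma>_def multiset_eq_iff)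
    moreover have "\<sigma> \<subseteq># \<pi>"
      unfolding \<sigma>_def by (rule subset_mset.order_trans[OF multiset_filter_subset \<open>\<tau> \<subseteq># \<pi>\<close>])
    then have "\<sigma> \<in> C_submultisets \<pi> m"
      using set_\<tau> by (auto simp: \<sigma>_def C_submultisets_def)
    moreover have "count \<tau> (Suc m) \<in> {1..count \<pi> (Suc m)}"
      using set_\<tau> \<open>\<tau> \<subseteq># \<pi>\<close> by (auto simp: Suc_le_eq mset_subset_eq_count)
    ultimately show "\<tau> \<in> ?f ` ?rhs"
      by force
  qed
next
  show "?f ` ?rhs \<subseteq> ?lhs"
  proof clarify
    fix \<sigma> g
    assume \<sigma>: "\<sigma> \<in> C_submultisets \<pi> m" and g: "g \<in> {1..count \<pi> (Suc m)}"
    then have "count \<sigma> (Suc m) = 0" and "\<sigma> \<subseteq># \<pi>"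
      by (auto simp: C_submultisets_def count_eq_zero_iff)
    then have "\<sigma> + replicate_mset g (Suc m) \<subseteq># \<pi>"
      using g by (auto simp: subseteq_mset_def split: if_splits)
    then show "\<sigma> + replicate_mset g (Suc m) \<in> ?lhs"
      using \<sigma> g by (auto simp: C_submultisets_def)
  qed
qed

lemma inj_on_add_replicate_mset:
  "inj_on (\<lambda>(\<sigma>, g). \<sigma> + replicate_mset g x) ({\<sigma>. x \<notin># \<sigma>} \<times> UNIV)"
proof (rule inj_onI, clarify)
  fix \<sigma> g \<sigma>' g'
  assume "x \<notin># \<sigma>" "x \<notin># \<sigma>'" and eq: "\<sigma> + replicate_mset g x = \<sigma>' + replicate_mset g' x"
  then have "count \<sigma> x = 0" "count \<sigma>' x = 0"
    by (simp_all add: not_in_iff)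
  then have "g = g'"
    using arg_cong[OF eq, of "\<lambda>M. count M x"] by simp
  then show "\<sigma> = \<sigma>' \<and> g = g'"
    using eq by simp
qed

lemma h_add_replicate_mset:
  assumes "x \<notin># \<sigma>" "0 < g"
  shows "h (\<sigma> + replicate_mset g x) = h \<sigma> + (if even g then 1 else 0)"
proof -
  let ?E = "\<lambda>M. {i. i \<in># M \<and> even (count M i)}"
  have "count \<sigma> x = 0"
    using assms(1) by (simp add: not_in_iff)
  have "?E (\<sigma> + replicate_mset g x) = ?E \<sigma> \<union> (if even g then {x} else {})"
    using assms \<open>count \<sigma> x = 0\<close> by auto
  moreover have "finite (?E \<sigma>)" and "x \<notin> ?E \<sigma>"
    using assms(1) by auto
  ultimately show ?thesis
    by (simp add: h_def)
qed

lemma sum_alternating_sign: "(\<Sum>g=1..(c::nat). if even g then -1 else 1 :: int) = (if odd c then 1 else 0)"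
  by (induction c) auto

lemma sum_sign_C_submultisets:
  "(\<Sum>\<sigma>\<in>C_submultisets \<pi> m. (-1::int) ^ h \<sigma>) = (if \<forall>i\<in>{1..m}. odd (count \<pi> i) then 1 else 0)"
proof (induction m)
  case 0
  have "C_submultisets \<pi> 0 = {{#}}"
    by (auto simp: C_submultisets_def)
  then show ?case
    by (simp add: h_def)
next
  case (Suc m)
  let ?G = "{1..count \<pi> (Suc m)}"
  have new: "Suc m \<notin># \<sigma>" if "\<sigma> \<in> C_submultisets \<pi> m" for \<sigma>
    using that by (auto simp: C_submultisets_def)
  have inj: "inj_on (\<lambda>(\<sigma>, g). \<sigma> + replicate_mset g (Suc m)) (C_submultisets \<pi> m \<times> ?G)"
    by (rule inj_on_subset[OF inj_on_add_replicate_mset]) (use new in auto)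
  have "(\<Sum>\<sigma>\<in>C_submultisets \<pi> (Suc m). (-1::int) ^ h \<sigma>) =
        (\<Sum>(\<sigma>, g)\<in>C_submultisets \<pi> m \<times> ?G. (-1) ^ h (\<sigma> + replicate_mset g (Suc m)))"
    unfolding C_submultisets_Suc sum.reindex[OF inj] by (simp add: case_prod_unfold)
  also have "\<dots> = (\<Sum>(\<sigma>, g)\<in>C_submultisets \<pi> m \<times> ?G. (-1) ^ h \<sigma> * (if even g then -1 else 1))"
    by (rule sum.cong) (auto simp: h_add_replicate_mset new)
  also have "\<dots> = (\<Sum>\<sigma>\<in>C_submultisets \<pi> m. (-1) ^ h \<sigma>) * (\<Sum>g\<in>?G. if even g then -1 else 1)"
    by (simp add: sum_product sum.cartesian_product)
  also have "\<dots> = (if \<forall>i\<in>{1..Suc m}. odd (count \<pi> i) then 1 else 0)"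
    unfolding Suc sum_alternating_sign by (auto simp: atLeastAtMostSuc_conv)
  finally show ?case .
qed

lemma sum_sign_V_submultisets: "(\<Sum>\<sigma>\<in>{\<sigma>\<in>V. \<sigma> \<subseteq># \<pi>}. (-1::int) ^ h \<sigma>) = int (t \<pi>)"
proof -
  have "(\<Sum>\<sigma>\<in>{\<sigma>\<in>V. \<sigma> \<subseteq># \<pi>}. (-1::int) ^ h \<sigma>) =
        (\<Sum>m\<in>{1..sum_mset \<pi>}. \<Sum>\<sigma>\<in>C_submultisets \<pi> m. (-1) ^ h \<sigma>)"
    unfolding V_submultisets_eq_Union
    by (rule sum.UNION_disjoint) (simp_all add: finite_C_submultisets, auto simp: C_submultisets_def)
  also have "\<dots> = (\<Sum>m\<in>{1..sum_mset \<pi>}. if m \<le> t \<pi> then 1 else 0)"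
    by (simp add: sum_sign_C_submultisets le_t_iff)
  also have "\<dots> = int (card ({1..sum_mset \<pi>} \<inter> {m. m \<le> t \<pi>}))"
    by (simp add: sum.If_cases)
  also have "{1..sum_mset \<pi>} \<inter> {m. m \<le> t \<pi>} = {1..t \<pi>}"
    using t_le_sum_mset[of \<pi>] by auto
  finally show ?thesis
    by simp
qed

lemma sum_card_partitions_diff:
  fixes w :: "nat multiset \<Rightarrow> 'a::comm_semiring_1"
  assumes pos: "\<forall>\<sigma>\<in>S. \<forall>x\<in>#\<sigma>. 0 < x"
  shows "(\<Sum>\<sigma>\<in>{\<sigma>\<in>S. sum_mset \<sigma> \<le> n}. w \<sigma> * of_nat (card (partitions (n - sum_mset \<sigma>)))) =
         (\<Sum>\<pi>\<in>partitions n. \<Sum>\<sigma>\<in>{\<sigma>\<in>S. \<sigma> \<subseteq># \<pi>}. w \<sigma>)"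
proof -
  let ?W = "{\<sigma>\<in>S. sum_mset \<sigma> \<le> n}"
  let ?B = "\<lambda>\<sigma>. partitions (n - sum_mset \<sigma>)"
  let ?C = "\<lambda>\<pi>. {\<sigma>\<in>S. \<sigma> \<subseteq># \<pi>}"
  have "finite ?W"
    by (rule finite_subset[OF _ finite_partitions_le[of n]]) (use pos in auto)
  have "(\<Sum>\<sigma>\<in>?W. w \<sigma> * of_nat (card (?B \<sigma>))) = (\<Sum>\<sigma>\<in>?W. \<Sum>\<rho>\<in>?B \<sigma>. w \<sigma>)"
    by (simp add: mult.commute)
  also have "\<dots> = (\<Sum>(\<sigma>, \<rho>)\<in>Sigma ?W ?B. w \<sigma>)"
    by (rule sum.Sigma) (simp_all add: \<open>finite ?W\<close> finite_partitions)
  also have "\<dots> = (\<Sum>(\<pi>, \<sigma>)\<in>Sigma (partitions n) ?C. w \<sigma>)"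
  proof (rule sum.reindex_bij_witness[where i = "\<lambda>(\<pi>, \<sigma>). (\<sigma>, \<pi> - \<sigma>)" and j = "\<lambda>(\<sigma>, \<rho>). (\<sigma> + \<rho>, \<sigma>)"])
    fix a
    assume "a \<in> Sigma ?W ?B"
    then show "(\<lambda>(\<sigma>, \<rho>). (\<sigma> + \<rho>, \<sigma>)) a \<in> Sigma (partitions n) ?C"
      using pos by (auto simp: partitions_def)
  next
    fix b
    assume b: "b \<in> Sigma (partitions n) ?C"
    then obtain \<pi> \<sigma> where "b = (\<pi>, \<sigma>)" "\<pi> \<in> partitions n" "\<sigma> \<in> S" "\<sigma> \<subseteq># \<pi>"
      by auto
    moreover from \<open>\<sigma> \<subseteq># \<pi>\<close> have "sum_mset \<pi> = sum_mset \<sigma> + sum_mset (\<pi> - \<sigma>)"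
      by (metis subset_mset.add_diff_inverse sum_mset.union)
    ultimately show "(\<lambda>(\<pi>, \<sigma>). (\<sigma>, \<pi> - \<sigma>)) b \<in> Sigma ?W ?B"
      by (auto simp: partitions_def dest: in_diffD)
  qed auto
  also have "\<dots> = (\<Sum>\<pi>\<in>partitions n. \<Sum>\<sigma>\<in>?C \<pi>. w \<sigma>)"
    by (rule sum.Sigma[symmetric]) (auto simp: finite_partitions intro: finite_subset[OF _ finite_submultisets])
  finally show ?thesis .
qed

theorem mainTheorem5:
  fixes n :: nat
  assumes "n \<ge> 1"
  shows "(\<Sum>\<pi>\<in>partitions n. int (t \<pi>)) =
         (\<Sum>\<pi>\<in>{\<pi>\<in>V. sum_mset \<pi> \<le> n}. (-1) ^ h \<pi> * int (p (int n - int (sum_mset \<pi>))))"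
proof -
  \<comment> \<open>the identity holds for \<open>n = 0\<close> as well\<close>
  have V_pos: "\<forall>\<sigma>\<in>V. \<forall>x\<in>#\<sigma>. 0 < x"
    by (simp add: V_def is_C_partition_def)
  have "(\<Sum>\<pi>\<in>{\<pi>\<in>V. sum_mset \<pi> \<le> n}. (-1) ^ h \<pi> * int (p (int n - int (sum_mset \<pi>)))) =
        (\<Sum>\<sigma>\<in>{\<sigma>\<in>V. sum_mset \<sigma> \<le> n}. (-1) ^ h \<sigma> * int (card (partitions (n - sum_mset \<sigma>))))"
    by (rule sum.cong[OF refl]) (simp only: mem_Collect_eq p_diff)
  also have "\<dots> = (\<Sum>\<pi>\<in>partitions n. \<Sum>\<sigma>\<in>{\<sigma>\<in>V. \<sigma> \<subseteq># \<pi>}. (-1) ^ h \<sigma>)"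
    by (rule sum_card_partitions_diff[OF V_pos])
  also have "\<dots> = (\<Sum>\<pi>\<in>partitions n. int (t \<pi>))"
    by (simp add: sum_sign_V_submultisets)
  finally show ?thesis
    by simp
qed

end
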